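(* For every integer $n\ge 0$, $c_2(5n+2)\equiv 0 \pmod 2$.
   Context: A partition of $n\ge 0$ is a finite multiset of positive integers summing to $n$. For $n\ge 0$, $c_2(n)$ denotes the number of pairs $(j,\lambda)$, where $j\ge 1$ is an integer and $\lambda$ is a partition of $n$, such that: each of the odd integers $1,3,\dots,2j-1$ appears in $\lambda$ exactly once; every even part of $\lambda$ is greater than $2j$ and the even parts of $\lambda$ are distinct; odd parts $\ge 2j+1$ may appear with any multiplicity. (A single partition is counted once for each $j$ for which these conditions hold.) *)

theory Defs
  imports Main "HOL-Library.Multiset"
begin

definition is_partition :: "nat multiset \<Rightarrow> nat \<Rightarrow> bool" where
  "is_partition lam n \<longleftrightarrow> (\<forall>p\<in>#lam. p > 0) \<and> sum_mset lam = n"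

definition c2_cond :: "nat \<Rightarrow> nat multiset \<Rightarrow> bool" where
  "c2_cond j lam \<longleftrightarrow> j \<ge> 1
     \<and> (\<forall>i\<in>{1..j}. count lam (2*i - 1) = 1)
     \<and> (\<forall>p\<in>#lam. even p \<longrightarrow> p > 2*j \<and> count lam p = 1)"

definition c2 :: "nat \<Rightarrow> nat" where
  "c2 n = card {(j, lam). is_partition lam n \<and> c2_cond j lam}"

end

theory Submission
  imports Defs "HOL-Computational_Algebra.Formal_Power_Series" "HOL-Library.Z2"
begin

unbundle fps_syntax

text \<open>
  We work in \<open>\<bbbF>\<^sub>2[[X]]\<close>, where \<open>c\<^sub>2(N) mod 2\<close> is the coefficient of
  \<open>X\<^bsup>2N\<^esup>\<close> in \<open>\<Sum>\<^sub>j\<^sub>\<ge>\<^sub>1 X\<^bsup>2j\<^sup>2\<^esup> (-X\<^bsup>4j+4\<^esup>; X\<^sup>4)\<^sub>\<infinity> / (X\<^bsup>4j+2\<^esup>; X\<^sup>4)\<^sub>\<infinity>\<close>.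
  Adding the term \<open>j = 0\<close> and rearranging a double sum obtained from the \<open>q\<close>-binomial theorem
  turns the whole sum into \<open>(-X\<^sup>4; X\<^sup>4)\<^sub>\<infinity> \<Sum>\<^sub>n X\<^bsup>4n\<^sup>2\<^esup> / (X\<^sup>2; X\<^sup>2)\<^sub>2\<^sub>n\<close>, the even part of
  \<open>(-X\<^sup>4; X\<^sup>4)\<^sub>\<infinity> \<Sum>\<^sub>m X\<^bsup>m\<^sup>2\<^esup> / (X\<^sup>2; X\<^sup>2)\<^sub>m = (-X\<^sup>4; X\<^sup>4)\<^sub>\<infinity> (-X; X\<^sup>2)\<^sub>\<infinity>\<close> (Euler).
  Modulo 2, Gauss's identity turns this product into \<open>\<psi>(X) = \<Sum>\<^sub>m X\<^bsup>m(m+1)/2\<^esup>\<close> and the term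
  \<open>j = 0\<close> into \<open>\<psi>(X\<^sup>2)\<close>. Hence \<open>c\<^sub>2(N)\<close> is odd iff exactly one of \<open>2N\<close> and \<open>N\<close> is triangular,
  and for \<open>N = 5n + 2\<close> neither is, as \<open>m(m + 1) mod 5 \<in> {0, 1, 2}\<close>.
  Infinite products are replaced throughout by finite ones that agree with them below the degree
  of interest.
\<close>

section \<open>Agreement of power series below a degree\<close>

definition agree_below :: "nat \<Rightarrow> 'a::zero fps \<Rightarrow> 'a fps \<Rightarrow> bool" where
  "agree_below M f g \<longleftrightarrow> (\<forall>i<M. f $ i = g $ i)"

lemma agree_belowD: "agree_below M f g \<Longrightarrow> i < M \<Longrightarrow> f $ i = g $ i"
  by (simp add: agree_below_def)

lemma agree_below_refl [simp]: "agree_below M f f"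
  by (simp add: agree_below_def)

lemma agree_below_sym: "agree_below M f g \<Longrightarrow> agree_below M g f"
  by (simp add: agree_below_def)

lemma agree_below_trans [trans]: "agree_below M f g \<Longrightarrow> agree_below M g h \<Longrightarrow> agree_below M f h"
  by (simp add: agree_below_def)

lemma agree_below_mono: "agree_below M f g \<Longrightarrow> M' \<le> M \<Longrightarrow> agree_below M' f g"
  by (simp add: agree_below_def)

lemma agree_below_add:
  "agree_below M f g \<Longrightarrow> agree_below M h k \<Longrightarrow> agree_below M (f + h) (g + k)"
  by (simp add: agree_below_def)

lemma agree_below_mult:
  fixes f g h k :: "'a::semiring_0 fps"
  assumes "agree_below M f g" "agree_below M h k"
  shows "agree_below M (f * h) (g * k)"
  unfolding agree_below_def fps_mult_nth
  using assms by (auto simp: agree_below_def intro!: sum.cong)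

lemma agree_below_sum:
  "(\<And>x. x \<in> A \<Longrightarrow> agree_below M (f x) (g x)) \<Longrightarrow> agree_below M (\<Sum>x\<in>A. f x) (\<Sum>x\<in>A. g x)"
  by (simp add: agree_below_def fps_sum_nth)

lemma agree_below_prod:
  fixes f g :: "'b \<Rightarrow> 'a::comm_semiring_1 fps"
  assumes "\<And>x. x \<in> A \<Longrightarrow> agree_below M (f x) (g x)"
  shows "agree_below M (\<Prod>x\<in>A. f x) (\<Prod>x\<in>A. g x)"
proof (cases "finite A")
  case True
  then show ?thesis using assms
    by (induction A rule: finite_induct) (simp_all add: agree_below_mult)
qed simp

lemma agree_below_sum_subset:
  assumes "finite B" "A \<subseteq> B" "\<And>x. x \<in> B - A \<Longrightarrow> agree_below M (f x) 0"
  shows "agree_below M (\<Sum>x\<in>B. f x) (\<Sum>x\<in>A. f x)"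
proof -
  have "agree_below M (\<Sum>x\<in>B - A. f x) (\<Sum>x\<in>B - A. 0)"
    by (rule agree_below_sum) (use assms(3) in auto)
  then have "agree_below M ((\<Sum>x\<in>B - A. f x) + (\<Sum>x\<in>A. f x)) (\<Sum>x\<in>A. f x)"
    using agree_below_add[OF _ agree_below_refl] by fastforce
  then show ?thesis
    by (simp add: sum.subset_diff[OF assms(2,1)])
qed

lemma agree_below_X_power_mult:
  "M \<le> a \<Longrightarrow> agree_below M (fps_X ^ a * (f :: 'a::comm_semiring_1 fps)) 0"
  by (simp add: agree_below_def fps_X_power_mult_nth)

lemma agree_below_inverse:
  fixes f g :: "'a::field fps"
  assumes fg: "agree_below M f g" and f0: "f $ 0 \<noteq> 0"
  shows "agree_below M (inverse f) (inverse g)"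
proof (cases "M = 0")
  case False
  then have g0: "g $ 0 \<noteq> 0" using fg f0 by (simp add: agree_below_def)
  have "agree_below M (inverse f * g * inverse g) (inverse f * f * inverse g)"
    by (intro agree_below_mult agree_below_refl agree_below_sym[OF fg])
  then show ?thesis
    using f0 g0 by (simp add: mult.assoc inverse_mult_eq_1 inverse_mult_eq_1')
qed (simp add: agree_below_def)

abbreviation X :: "bit fps" where "X \<equiv> fps_X"

lemma fps_bit_two [simp]: "(2 :: bit fps) = 0"
  by (simp add: numeral_fps_const)

lemma fps_bit_add_self [simp]: "(f :: bit fps) + f = 0"
  by (simp flip: mult_2)

lemma one_plus_X_power_add: "(1 + X ^ a) + X ^ a * (1 + X ^ b) = 1 + X ^ (a + b)"
proof -
  have "(1 + X ^ a) + X ^ a * (1 + X ^ b) = 1 + X ^ (a + b) + (X ^ a + X ^ a)"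
    by (simp add: distrib_left power_add add_ac)
  then show ?thesis by simp
qed

lemma one_plus_X_power_square: "(1 + X ^ a) * (1 + X ^ a) = 1 + X ^ (2 * a)"
proof -
  have "(1 + X ^ a) * (1 + X ^ a) = 1 + X ^ (2 * a) + (X ^ a + X ^ a)"
    by (simp add: algebra_simps power_add[symmetric] mult_2)
  then show ?thesis by simp
qed

text \<open>Over \<open>\<bbbF>\<^sub>2\<close>, \<open>qprod c d n\<close> is both \<open>(X\<^sup>c; X\<^sup>d)\<^sub>n\<close> and \<open>(-X\<^sup>c; X\<^sup>d)\<^sub>n\<close>.\<close>

definition qprod :: "nat \<Rightarrow> nat \<Rightarrow> nat \<Rightarrow> bit fps" where
  "qprod c d n = (\<Prod>i<n. 1 + X ^ (c + d * i))"

lemma qprod_0 [simp]: "qprod c d 0 = 1"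
  by (simp add: qprod_def)

lemma qprod_Suc: "qprod c d (Suc n) = qprod c d n * (1 + X ^ (c + d * n))"
  by (simp add: qprod_def)

lemma qprod_add: "qprod c d (m + n) = qprod c d m * qprod (c + d * m) d n"
  by (induction n) (simp_all add: qprod_Suc algebra_simps)

lemma qprod_nth_0 [simp]: "c > 0 \<Longrightarrow> qprod c d n $ 0 = 1"
  by (induction n) (simp_all add: qprod_Suc)

lemma qprod_mult_inverse [simp]: "c > 0 \<Longrightarrow> qprod c d n * inverse (qprod c d n) = 1"
  by (simp add: inverse_mult_eq_1')

lemma inverse_mult_qprod [simp]: "c > 0 \<Longrightarrow> inverse (qprod c d n) * qprod c d n = 1"
  by (simp add: inverse_mult_eq_1)

lemma inverse_qprod: "inverse (qprod c d n) = (\<Prod>i<n. inverse (1 + X ^ (c + d * i)))"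
  by (induction n) (simp_all add: qprod_Suc fps_inverse_mult)

lemma qprod_agree_one: "M \<le> c \<Longrightarrow> agree_below M (qprod c d n) 1"
proof (induction n)
  case (Suc n)
  have "agree_below M (1 + X ^ (c + d * n)) 1"
    using Suc.prems by (simp add: agree_below_def)
  with Suc show ?case
    using agree_below_mult by (fastforce simp: qprod_Suc)
qed simp

lemma qprod_agree_below_le:
  assumes "m \<le> n" "M \<le> c + d * m"
  shows "agree_below M (qprod c d n) (qprod c d m)"
proof -
  have "agree_below M (qprod c d m * qprod (c + d * m) d (n - m)) (qprod c d m * 1)"
    by (intro agree_below_mult agree_below_refl qprod_agree_one assms(2))
  then show ?thesis
    using qprod_add[of c d m "n - m"] assms(1) by simp
qed

lemma qprod_agree_below: "M \<le> c + d * min m n \<Longrightarrow> agree_below M (qprod c d n) (qprod c d m)"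
  by (cases "m \<le> n")
    (auto simp: min_def intro: qprod_agree_below_le agree_below_sym[OF qprod_agree_below_le])

lemma qprod_double: "qprod c d (2 * n) = qprod c (2 * d) n * qprod (c + d) (2 * d) n"
  by (induction n) (simp_all add: qprod_Suc algebra_simps)

lemma qprod_square: "qprod c d n * qprod c d n = qprod (2 * c) (2 * d) n"
proof (induction n)
  case (Suc n)
  have "qprod c d (Suc n) * qprod c d (Suc n)
      = (qprod c d n * qprod c d n) * ((1 + X ^ (c + d * n)) * (1 + X ^ (c + d * n)))"
    by (simp add: qprod_Suc ac_simps)
  also have "\<dots> = qprod (2 * c) (2 * d) n * (1 + X ^ (2 * c + 2 * d * n))"
  proof -
    have "2 * (c + d * n) = 2 * c + 2 * d * n" by simp
    then show ?thesis by (simp only: Suc one_plus_X_power_square)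
  qed
  finally show ?case
    by (simp only: qprod_Suc)
qed simp

fun tri :: "nat \<Rightarrow> nat" where
  "tri 0 = 0"
| "tri (Suc n) = tri n + n"

lemma tri_eq_sum: "tri n = (\<Sum>i<n. i)"
  by (induction n) simp_all

lemma tri_double_add: "2 * tri n + n = n\<^sup>2"
  by (induction n) (simp_all add: power2_eq_square)

lemma tri_Suc_double: "2 * tri (Suc m) = m * (m + 1)"
  using tri_double_add[of m] by (simp add: power2_eq_square)

lemma tri_double_int: "2 * int (tri n) = int n * (int n - 1)"
proof -
  have "int (2 * tri n + n) = int n ^ 2" by (simp only: tri_double_add of_nat_power)
  then show ?thesis by (simp add: power2_eq_square algebra_simps)
qed

lemma tri_quadruple_add: "4 * tri k + 2 * k = 2 * k\<^sup>2"
  using tri_double_add[of k] by simp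

lemma strict_mono_tri_Suc: "strict_mono (\<lambda>m. tri (Suc m))"
  by (simp add: strict_mono_Suc_iff)

fun qbinom :: "nat \<Rightarrow> nat \<Rightarrow> nat \<Rightarrow> bit fps" where
  "qbinom d 0 k = (if k = 0 then 1 else 0)"
| "qbinom d (Suc m) k =
     qbinom d m k + (if k = 0 then 0 else X ^ (d * (Suc m - k)) * qbinom d m (k - 1))"

lemma qbinom_eq_0 [simp]: "m < k \<Longrightarrow> qbinom d m k = 0"
  by (induction m arbitrary: k) auto

lemma qbinom_0_right [simp]: "qbinom d m 0 = 1"
  by (induction m) auto

lemma qbinom_diag [simp]: "qbinom d m m = 1"
  by (induction m) auto

theorem qbinom_theorem:
  "(\<Prod>i<m. y + z * X ^ (d * i)) = (\<Sum>k\<le>m. qbinom d m k * X ^ (d * tri k) * z ^ k * y ^ (m - k))"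
proof (induction m)
  case (Suc m)
  define t where "t k = qbinom d m k * X ^ (d * tri k) * z ^ k" for k
  have old: "(\<Sum>k\<le>Suc m. t k * y ^ (Suc m - k)) = (\<Sum>k\<le>m. t k * y ^ (m - k)) * y"
    by (simp add: t_def sum_distrib_left sum_distrib_right Suc_diff_le ac_simps)
  have new: "(\<Sum>k\<le>Suc m. (if k = 0 then 0 else X ^ (d * (Suc m - k)) * qbinom d m (k - 1))
        * X ^ (d * tri k) * z ^ k * y ^ (Suc m - k))
      = (\<Sum>k\<le>m. t k * y ^ (m - k)) * (z * X ^ (d * m))"
  proof -
    have "(\<Sum>k\<le>Suc m. (if k = 0 then 0 else X ^ (d * (Suc m - k)) * qbinom d m (k - 1))
        * X ^ (d * tri k) * z ^ k * y ^ (Suc m - k))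
      = (\<Sum>k\<le>m. X ^ (d * (m - k)) * qbinom d m k * X ^ (d * tri (Suc k)) * z ^ Suc k * y ^ (m - k))"
      by (subst sum.atMost_Suc_shift) simp
    also have "\<dots> = (\<Sum>k\<le>m. t k * y ^ (m - k) * (z * X ^ (d * m)))"
    proof (rule sum.cong)
      fix k assume "k \<in> {..m}"
      then have "d * (m - k) + d * tri (Suc k) = d * tri k + d * m"
        by (simp flip: distrib_left)
      then have "X ^ (d * (m - k)) * X ^ (d * tri (Suc k)) = X ^ (d * tri k) * X ^ (d * m)"
        by (simp flip: power_add)
      then show "X ^ (d * (m - k)) * qbinom d m k * X ^ (d * tri (Suc k)) * z ^ Suc k * y ^ (m - k)
          = t k * y ^ (m - k) * (z * X ^ (d * m))"
        unfolding t_def by (simp add: algebra_simps)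
    qed simp
    finally show ?thesis by (simp add: sum_distrib_right)
  qed
  have "(\<Sum>k\<le>Suc m. qbinom d (Suc m) k * X ^ (d * tri k) * z ^ k * y ^ (Suc m - k))
      = (\<Sum>k\<le>Suc m. t k * y ^ (Suc m - k))
        + (\<Sum>k\<le>Suc m. (if k = 0 then 0 else X ^ (d * (Suc m - k)) * qbinom d m (k - 1))
            * X ^ (d * tri k) * z ^ k * y ^ (Suc m - k))"
    by (simp add: t_def distrib_right sum.distrib)
  also have "\<dots> = (\<Sum>k\<le>m. t k * y ^ (m - k)) * (y + z * X ^ (d * m))"
    unfolding old new by (simp add: distrib_left)
  also have "\<dots> = (\<Prod>i<m. y + z * X ^ (d * i)) * (y + z * X ^ (d * m))"
    by (simp add: Suc t_def)
  finally show ?case by simp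
qed simp

lemma qprod_qbinom_expansion: "qprod c d n = (\<Sum>k\<le>n. qbinom d n k * X ^ (c * k + d * tri k))"
proof -
  have "qprod c d n = (\<Prod>i<n. 1 + X ^ c * X ^ (d * i))"
    by (simp add: qprod_def power_add)
  also have "\<dots> = (\<Sum>k\<le>n. qbinom d n k * X ^ (d * tri k) * (X ^ c) ^ k * 1 ^ (n - k))"
    by (rule qbinom_theorem)
  finally show ?thesis
    by (simp add: power_add ac_simps flip: power_mult)
qed

lemma qbinom_mult_qprod:
  "k \<le> m \<Longrightarrow> qbinom d m k * qprod d d k * qprod d d (m - k) = qprod d d m"
proof (induction m arbitrary: k)
  case (Suc m k)
  show ?case
  proof (cases "k = 0 \<or> k = Suc m")
    case False
    then have k: "0 < k" "k \<le> m" using Suc.prems by auto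
    define a where "a = d * (Suc m - k)"
    have a: "a + d * k = d + d * m"
      using k by (simp add: a_def flip: distrib_left)
    have IH1: "qbinom d m k * qprod d d k * qprod d d (Suc m - k) = qprod d d m * (1 + X ^ a)"
      using Suc.IH[OF k(2)] k by (simp add: a_def Suc_diff_le qprod_Suc algebra_simps)
    have IH2: "qbinom d m (k - 1) * qprod d d k * qprod d d (Suc m - k) = qprod d d m * (1 + X ^ (d * k))"
      using Suc.IH[of "k - 1"] qprod_Suc[of d d "k - 1"] k by (simp add: algebra_simps)
    have "qbinom d (Suc m) k * qprod d d k * qprod d d (Suc m - k) =
        qbinom d m k * qprod d d k * qprod d d (Suc m - k)
        + X ^ a * (qbinom d m (k - 1) * qprod d d k * qprod d d (Suc m - k))"
      using k by (simp add: a_def algebra_simps)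
    also have "\<dots> = qprod d d m * ((1 + X ^ a) + X ^ a * (1 + X ^ (d * k)))"
      unfolding IH1 IH2 by (simp add: algebra_simps)
    also have "\<dots> = qprod d d (Suc m)"
      by (simp only: one_plus_X_power_add a qprod_Suc)
    finally show ?thesis .
  qed auto
qed simp

lemma qbinom_eq_qprod_quotient:
  assumes "0 < d" "k \<le> m"
  shows "qbinom d m k = qprod d d m * inverse (qprod d d k) * inverse (qprod d d (m - k))"
proof -
  have "qbinom d m k
      = qbinom d m k * (qprod d d k * inverse (qprod d d k)) * (qprod d d (m - k) * inverse (qprod d d (m - k)))"
    using assms(1) by simp
  also have "\<dots> = (qbinom d m k * qprod d d k * qprod d d (m - k))
      * (inverse (qprod d d k) * inverse (qprod d d (m - k)))"
    by (simp only: ac_simps)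
  also have "\<dots> = qprod d d m * (inverse (qprod d d k) * inverse (qprod d d (m - k)))"
    by (simp only: qbinom_mult_qprod[OF assms(2)])
  finally show ?thesis
    by (simp only: mult.assoc)
qed

lemma qbinom_symmetric: "0 < d \<Longrightarrow> k \<le> m \<Longrightarrow> qbinom d m (m - k) = qbinom d m k"
  by (simp add: qbinom_eq_qprod_quotient ac_simps)

lemma qbinom_agree_inverse_qprod:
  assumes "0 < d" "k \<le> m"
  shows "agree_below (d * (m - k + 1)) (qbinom d m k) (inverse (qprod d d k))"
proof -
  have "agree_below (d * (m - k + 1)) (qprod d d m) (qprod d d (m - k))"
    by (rule qprod_agree_below) (simp add: min_def algebra_simps)
  then have "agree_below (d * (m - k + 1)) (qprod d d m * inverse (qprod d d k) * inverse (qprod d d (m - k)))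
      (qprod d d (m - k) * inverse (qprod d d k) * inverse (qprod d d (m - k)))"
    by (intro agree_below_mult agree_below_refl)
  moreover have "qprod d d (m - k) * inverse (qprod d d k) * inverse (qprod d d (m - k))
      = (qprod d d (m - k) * inverse (qprod d d (m - k))) * inverse (qprod d d k)"
    by (simp only: ac_simps)
  ultimately show ?thesis
    using assms by (simp add: qbinom_eq_qprod_quotient)
qed

lemma qbinom_mult_qprod_agree_one_le:
  assumes "0 < d" "2 * k \<le> m" "k \<le> N"
  shows "agree_below (d * (k + 1)) (qbinom d m k * qprod d d N) 1"
proof -
  have "agree_below (d * (k + 1)) (qbinom d m k) (inverse (qprod d d k))"
    using qbinom_agree_inverse_qprod[of d k m] assms by (auto elim: agree_below_mono)
  moreover have "agree_below (d * (k + 1)) (qprod d d N) (qprod d d k)"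
    by (rule qprod_agree_below) (use assms(3) in \<open>simp add: min_def algebra_simps\<close>)
  ultimately have "agree_below (d * (k + 1)) (qbinom d m k * qprod d d N) (inverse (qprod d d k) * qprod d d k)"
    by (rule agree_below_mult)
  then show ?thesis using assms(1) by simp
qed

lemma qbinom_mult_qprod_agree_one:
  assumes "0 < d" "k \<le> m" "min k (m - k) \<le> N"
  shows "agree_below (d * (min k (m - k) + 1)) (qbinom d m k * qprod d d N) 1"
proof (cases "2 * k \<le> m")
  case True
  then have "min k (m - k) = k" by simp
  then show ?thesis
    using qbinom_mult_qprod_agree_one_le[of d k m N] assms True by simp
next
  case False
  then have "min k (m - k) = m - k" by simp
  then show ?thesis
    using qbinom_mult_qprod_agree_one_le[of d "m - k" m N] assms False
    by (simp add: qbinom_symmetric)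
qed

section \<open>The identities of Euler and Gauss\<close>

theorem euler_identity_agree:
  assumes "0 < c" "0 < d"
  shows "agree_below M (qprod c d M) (\<Sum>k<M. X ^ (c * k + d * tri k) * inverse (qprod d d k))"
proof -
  have "agree_below M (qprod c d M) (qprod c d (2 * M))"
    by (rule qprod_agree_below) (use assms in \<open>simp add: min_def trans_le_add2\<close>)
  also have "qprod c d (2 * M) = (\<Sum>k\<le>2 * M. qbinom d (2 * M) k * X ^ (c * k + d * tri k))"
    by (rule qprod_qbinom_expansion)
  also have "agree_below M \<dots> (\<Sum>k<M. qbinom d (2 * M) k * X ^ (c * k + d * tri k))"
  proof (rule agree_below_sum_subset)
    fix k assume "k \<in> {..2 * M} - {..<M}"
    then have "M \<le> k" by simp
    also have "k \<le> c * k" using assms(1) by simp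
    finally have "agree_below M (X ^ (c * k) * (X ^ (d * tri k) * qbinom d (2 * M) k)) 0"
      by (rule agree_below_X_power_mult)
    then show "agree_below M (qbinom d (2 * M) k * X ^ (c * k + d * tri k)) 0"
      by (simp only: power_add ac_simps)
  qed auto
  also have "agree_below M \<dots> (\<Sum>k<M. X ^ (c * k + d * tri k) * inverse (qprod d d k))"
  proof (rule agree_below_sum)
    fix k assume k: "k \<in> {..<M}"
    have "agree_below (d * (2 * M - k + 1)) (qbinom d (2 * M) k) (inverse (qprod d d k))"
      by (rule qbinom_agree_inverse_qprod) (use assms k in auto)
    moreover have "M \<le> d * (2 * M - k + 1)"
    proof -
      have "M \<le> 2 * M - k + 1" using k by simp
      also have "\<dots> \<le> d * (2 * M - k + 1)" using assms(2) by (cases d) auto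
      finally show ?thesis .
    qed
    ultimately have "agree_below M (qbinom d (2 * M) k) (inverse (qprod d d k))"
      by (rule agree_below_mono)
    then show "agree_below M (qbinom d (2 * M) k * X ^ (c * k + d * tri k))
        (X ^ (c * k + d * tri k) * inverse (qprod d d k))"
      by (subst mult.commute[of "X ^ _"]) (intro agree_below_mult agree_below_refl)
  qed
  finally show ?thesis .
qed

lemma prod_lessThan_add: "(\<Prod>i<m + n. f i) = (\<Prod>i<m. f i) * (\<Prod>i<n. f (m + i))"
  for f :: "nat \<Rightarrow> 'a::comm_monoid_mult"
  by (induction n) (simp_all add: mult.assoc)

lemma prod_X_power_plus_lower:
  "(\<Prod>i<n. X ^ (c + e * (n - 1)) + X ^ (e * i)) = X ^ (e * tri n) * qprod c e n"
proof -
  have "(\<Prod>i<n. X ^ (c + e * (n - 1)) + X ^ (e * i))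
      = (\<Prod>l<n. X ^ (c + e * (n - 1)) + X ^ (e * (n - Suc l)))"
    by (rule prod.nat_diff_reindex[symmetric])
  also have "\<dots> = (\<Prod>l<n. X ^ (e * (n - Suc l)) * (1 + X ^ (c + e * l)))"
  proof (rule prod.cong)
    fix l assume "l \<in> {..<n}"
    then have "c + e * (n - 1) = e * (n - Suc l) + (c + e * l)"
      by (simp flip: distrib_left)
    then show "X ^ (c + e * (n - 1)) + X ^ (e * (n - Suc l)) = X ^ (e * (n - Suc l)) * (1 + X ^ (c + e * l))"
      by (simp add: power_add distrib_left add.commute)
  qed simp
  also have "\<dots> = (\<Prod>i<n. X ^ (e * i)) * qprod c e n"
    by (simp add: prod.distrib qprod_def prod.nat_diff_reindex[where g = "\<lambda>i. X ^ (e * i)"])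
  finally show ?thesis
    by (simp add: power_sum[symmetric] sum_distrib_left[symmetric] tri_eq_sum)
qed

lemma prod_X_power_plus_upper:
  "(\<Prod>l<n. X ^ a + X ^ (a + c + e * l)) = X ^ (a * n) * qprod c e n"
proof -
  have "(\<Prod>l<n. X ^ a + X ^ (a + c + e * l)) = (\<Prod>l<n. X ^ a * (1 + X ^ (c + e * l)))"
    by (simp add: power_add distrib_left add.assoc)
  then show ?thesis
    by (simp add: prod.distrib qprod_def power_mult)
qed

text \<open>\<open>zigzag n\<close> reorders \<open>{..2n}\<close> so that the exponents in \<open>qprod_gauss_finite\<close> become
  triangular numbers.\<close>

definition zigzag :: "nat \<Rightarrow> nat \<Rightarrow> nat" where
  "zigzag n k = (if k \<le> n then 2 * (n - k) else 2 * (k - n) - 1)"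

lemma bij_betw_zigzag: "bij_betw (zigzag n) {..2 * n} {..2 * n}"
proof (rule bij_betw_byWitness[where f' = "\<lambda>m. if even m then n - m div 2 else n + (m + 1) div 2"])
  show "\<forall>m\<in>{..2 * n}. zigzag n ((\<lambda>m. if even m then n - m div 2 else n + (m + 1) div 2) m) = m"
    by (auto simp: zigzag_def elim!: evenE oddE)
qed (auto simp: zigzag_def elim!: oddE)

lemma tri_Suc_zigzag: "int (tri (Suc (zigzag n k))) = (int k - int n) * (2 * (int k - int n) - 1)"
proof -
  have "2 * int (tri (Suc (zigzag n k))) = int (zigzag n k) * (int (zigzag n k) + 1)"
    using tri_double_int[of "Suc (zigzag n k)"] by simp
  moreover have "int (zigzag n k) = (if k \<le> n then 2 * (int n - int k) else 2 * (int k - int n) - 1)"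
    by (simp add: zigzag_def of_nat_diff)
  ultimately show ?thesis
    by (cases "k \<le> n") (simp_all add: algebra_simps)
qed

lemma zigzag_exponent:
  assumes "k \<le> 2 * Suc M"
  shows "4 * tri k + (4 * M + 3) * (2 * Suc M - k)
    = 4 * tri (Suc M) + (4 * M + 3) * Suc M + tri (Suc (zigzag (Suc M) k))"
proof -
  have k: "2 * int (tri k) = int k * (int k - 1)"
    and M: "2 * int (tri (Suc M)) = (int M + 1) * int M"
    and z: "int (tri (Suc (zigzag (Suc M) k))) = (int k - int M - 1) * (2 * (int k - int M - 1) - 1)"
    using tri_double_int[of k] tri_double_int[of "Suc M"] tri_Suc_zigzag[of "Suc M" k]
    by (simp_all del: tri.simps)
  have d: "int (2 * Suc M - k) = 2 * int M + 2 - int k"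
    using assms by (simp add: of_nat_diff)
  have "int (4 * tri k + (4 * M + 3) * (2 * Suc M - k))
      = 4 * int (tri k) + (4 * int M + 3) * (2 * int M + 2 - int k)"
    by (simp only: of_nat_add of_nat_mult of_nat_numeral d)
  also have "\<dots> = 4 * int (tri (Suc M)) + (4 * int M + 3) * (int M + 1) + int (tri (Suc (zigzag (Suc M) k)))"
    using k M z by algebra
  also have "\<dots> = int (4 * tri (Suc M) + (4 * M + 3) * Suc M + tri (Suc (zigzag (Suc M) k)))"
    by (simp add: distrib_left del: tri.simps)
  finally show ?thesis by (simp only: of_nat_eq_iff)
qed

text \<open>Gauss's identity in finite form: apply the \<open>q\<close>-binomial theorem to \<open>\<Prod>\<^sub>i\<^sub><\<^sub>2\<^sub>n (X\<^sup>a + X\<^bsup>4wi\<^esup>)\<close>,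
  whose lower and upper halves give the two products.\<close>

lemma qprod_gauss_finite:
  "qprod (3 * w) (4 * w) (Suc M) * qprod w (4 * w) (Suc M)
    = (\<Sum>k\<le>2 * Suc M. qbinom (4 * w) (2 * Suc M) k * X ^ (w * tri (Suc (zigzag (Suc M) k))))"
proof -
  define n where "n = Suc M"
  define a where "a = w * (4 * M + 3)"
  define c where "c = 4 * w * tri n + a * n"
  have lower: "(\<Prod>i<n. X ^ a + X ^ (4 * w * i)) = X ^ (4 * w * tri n) * qprod (3 * w) (4 * w) n"
    using prod_X_power_plus_lower[of "3 * w" "4 * w" n] by (simp add: a_def n_def algebra_simps)
  have upper: "(\<Prod>l<n. X ^ a + X ^ (4 * w * (n + l))) = X ^ (a * n) * qprod w (4 * w) n"
    using prod_X_power_plus_upper[of a w "4 * w" n] by (simp add: a_def n_def algebra_simps)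
  have "X ^ c * (qprod (3 * w) (4 * w) n * qprod w (4 * w) n) = (\<Prod>i<n + n. X ^ a + X ^ (4 * w * i))"
    unfolding prod_lessThan_add lower upper c_def by (simp add: power_add ac_simps)
  also have "\<dots> = (\<Sum>k\<le>2 * n. qbinom (4 * w) (2 * n) k * X ^ (4 * w * tri k) * (X ^ a) ^ (2 * n - k))"
    using qbinom_theorem[of "X ^ a" 1 "4 * w" "2 * n"] by (simp add: mult_2)
  also have "\<dots> = X ^ c * (\<Sum>k\<le>2 * n. qbinom (4 * w) (2 * n) k * X ^ (w * tri (Suc (zigzag n k))))"
    unfolding sum_distrib_left
  proof (rule sum.cong)
    fix k assume "k \<in> {..2 * n}"
    have "4 * w * tri k + a * (2 * n - k) = c + w * tri (Suc (zigzag n k))"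
    proof -
      have "4 * w * tri k + a * (2 * n - k) = w * (4 * tri k + (4 * M + 3) * (2 * n - k))"
        by (simp add: a_def algebra_simps)
      also have "\<dots> = w * (4 * tri n + (4 * M + 3) * n + tri (Suc (zigzag n k)))"
        using zigzag_exponent[of k M] \<open>k \<in> {..2 * n}\<close> by (simp add: n_def)
      finally show ?thesis by (simp add: a_def c_def algebra_simps)
    qed
    then show "qbinom (4 * w) (2 * n) k * X ^ (4 * w * tri k) * (X ^ a) ^ (2 * n - k)
        = X ^ c * (qbinom (4 * w) (2 * n) k * X ^ (w * tri (Suc (zigzag n k))))"
      by (simp add: ac_simps flip: power_mult power_add)
  qed simp
  finally show ?thesis
    by (simp add: n_def)
qed

definition psi_series :: "nat \<Rightarrow> bit fps" where
  "psi_series w = Abs_fps (\<lambda>i. of_bool (\<exists>m. i = w * tri (Suc m)))"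

lemma psi_series_agree:
  assumes "0 < w" "M \<le> n"
  shows "agree_below M (\<Sum>m\<le>2 * n. X ^ (w * tri (Suc m))) (psi_series w)"
  unfolding agree_below_def
proof (intro allI impI)
  fix i assume "i < M"
  have nth: "(\<Sum>m\<le>2 * n. X ^ (w * tri (Suc m))) $ i = (\<Sum>m\<le>2 * n. if i = w * tri (Suc m) then 1 else 0)"
    by (simp add: fps_sum_nth)
  show "(\<Sum>m\<le>2 * n. X ^ (w * tri (Suc m))) $ i = psi_series w $ i"
  proof (cases "\<exists>m. i = w * tri (Suc m)")
    case True
    then obtain m0 where m0: "i = w * tri (Suc m0)" by blast
    have "m0 \<le> tri (Suc m0)" by simp
    also have "\<dots> \<le> i" using m0 assms(1) by simp
    finally have "m0 \<in> {..2 * n}" using \<open>i < M\<close> assms(2) by simp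
    moreover have "i = w * tri (Suc m) \<longleftrightarrow> m = m0" for m
      using m0 assms(1) strict_mono_eq[OF strict_mono_tri_Suc] by auto
    ultimately show ?thesis
      using True nth by (simp add: psi_series_def)
  qed (use nth in \<open>simp add: psi_series_def del: tri.simps\<close>)
qed

lemma zigzag_bound:
  assumes "0 < w" "k \<le> 2 * Suc M" "w * tri (Suc (zigzag (Suc M) k)) < M"
  shows "M \<le> 4 * w * (min k (2 * Suc M - k) + 1)"
proof -
  have "zigzag (Suc M) k \<le> tri (Suc (zigzag (Suc M) k))" by simp
  also have "\<dots> \<le> w * tri (Suc (zigzag (Suc M) k))" using assms(1) by (simp del: tri.simps)
  finally have "zigzag (Suc M) k \<le> w * tri (Suc (zigzag (Suc M) k))" .
  then have "zigzag (Suc M) k < M" using assms(3) by linarith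
  then have "M \<le> 4 * (min k (2 * Suc M - k) + 1)"
    using assms(2) by (auto simp: zigzag_def min_def split: if_splits)
  also have "\<dots> \<le> 4 * w * (min k (2 * Suc M - k) + 1)" using assms(1) by (intro mult_le_mono1) simp
  finally show ?thesis .
qed

lemma gauss_term_agree:
  assumes "0 < w" "k \<le> 2 * Suc M"
  defines "e \<equiv> w * tri (Suc (zigzag (Suc M) k))"
  shows "agree_below M (qprod (4 * w) (4 * w) M * qbinom (4 * w) (2 * Suc M) k * X ^ e) (X ^ e)"
proof (cases "e < M")
  case False
  then have "agree_below M (X ^ e * (qprod (4 * w) (4 * w) M * qbinom (4 * w) (2 * Suc M) k)) 0"
    and "agree_below M (X ^ e * 1) 0"
    by (simp_all only: agree_below_X_power_mult not_less)
  then show ?thesis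
    by (simp add: mult.commute agree_below_def)
next
  case True
  have "agree_below (4 * w * (min k (2 * Suc M - k) + 1))
      (qbinom (4 * w) (2 * Suc M) k * qprod (4 * w) (4 * w) (2 * Suc M)) 1"
    by (rule qbinom_mult_qprod_agree_one) (use assms(1,2) in auto)
  then have one: "agree_below M (qbinom (4 * w) (2 * Suc M) k * qprod (4 * w) (4 * w) (2 * Suc M)) 1"
    by (rule agree_below_mono) (use zigzag_bound assms True in blast)
  have "agree_below M (qprod (4 * w) (4 * w) M) (qprod (4 * w) (4 * w) (2 * Suc M))"
    by (rule qprod_agree_below) (use assms(1) in \<open>simp add: min_def trans_le_add2\<close>)
  then have "agree_below M (qbinom (4 * w) (2 * Suc M) k * qprod (4 * w) (4 * w) M * X ^ e) (1 * X ^ e)"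
    using one by (meson agree_below_mult agree_below_refl agree_below_trans)
  then show ?thesis by (simp add: ac_simps)
qed

theorem gauss_identity_agree:
  assumes "0 < w"
  shows "agree_below M (qprod (4 * w) (4 * w) M * qprod w (2 * w) M) (psi_series w)"
proof -
  have "agree_below M (qprod w (2 * w) M) (qprod w (2 * w) (2 * Suc M))"
    by (rule qprod_agree_below) (use assms in \<open>simp add: min_def trans_le_add2\<close>)
  then have "agree_below M (qprod (4 * w) (4 * w) M * qprod w (2 * w) M)
      (qprod (4 * w) (4 * w) M * qprod w (2 * w) (2 * Suc M))"
    by (intro agree_below_mult agree_below_refl)
  also have "qprod w (2 * w) (2 * Suc M)
      = (\<Sum>k\<le>2 * Suc M. qbinom (4 * w) (2 * Suc M) k * X ^ (w * tri (Suc (zigzag (Suc M) k))))"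
    using qprod_double[of w "2 * w" "Suc M"] qprod_gauss_finite[of w M]
    by (simp add: mult.commute add.commute)
  also have "qprod (4 * w) (4 * w) M * \<dots> = (\<Sum>k\<le>2 * Suc M. qprod (4 * w) (4 * w) M
      * qbinom (4 * w) (2 * Suc M) k * X ^ (w * tri (Suc (zigzag (Suc M) k))))"
    by (simp only: sum_distrib_left mult.assoc)
  also have "agree_below M \<dots> (\<Sum>k\<le>2 * Suc M. X ^ (w * tri (Suc (zigzag (Suc M) k))))"
    by (rule agree_below_sum, rule gauss_term_agree[OF assms]) simp
  also have "(\<Sum>k\<le>2 * Suc M. X ^ (w * tri (Suc (zigzag (Suc M) k))))
      = (\<Sum>m\<le>2 * Suc M. X ^ (w * tri (Suc m)))"
    by (rule sum.reindex_bij_betw[OF bij_betw_zigzag])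
  also have "agree_below M \<dots> (psi_series w)"
    by (rule psi_series_agree) (use assms in simp_all)
  finally show ?thesis .
qed

definition even_fps :: "'a::zero fps \<Rightarrow> bool" where
  "even_fps f \<longleftrightarrow> (\<forall>i. odd i \<longrightarrow> f $ i = 0)"

definition odd_fps :: "'a::zero fps \<Rightarrow> bool" where
  "odd_fps f \<longleftrightarrow> (\<forall>i. even i \<longrightarrow> f $ i = 0)"

lemma even_fps_mult:
  fixes f g :: "'a::semiring_0 fps"
  assumes "even_fps f" "even_fps g"
  shows "even_fps (f * g)"
  unfolding even_fps_def fps_mult_nth
proof (intro allI impI sum.neutral ballI)
  fix i j :: nat assume "odd i" "j \<in> {0..i}"
  then have "odd j \<or> odd (i - j)" by auto
  then show "f $ j * g $ (i - j) = 0"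
    using assms by (elim disjE) (simp_all add: even_fps_def)
qed

lemma even_odd_fps_mult:
  fixes f g :: "'a::semiring_0 fps"
  assumes "even_fps f" "odd_fps g"
  shows "odd_fps (f * g)"
  unfolding odd_fps_def fps_mult_nth
proof (intro allI impI sum.neutral ballI)
  fix i j :: nat assume "even i" "j \<in> {0..i}"
  then have "odd j \<or> even (i - j)" by auto
  then show "f $ j * g $ (i - j) = 0"
    using assms by (elim disjE) (simp_all add: even_fps_def odd_fps_def)
qed

lemma even_fps_add: "even_fps f \<Longrightarrow> even_fps g \<Longrightarrow> even_fps (f + g)"
  for f g :: "'a::monoid_add fps"
  by (simp add: even_fps_def)

lemma even_fps_diff: "even_fps f \<Longrightarrow> even_fps g \<Longrightarrow> even_fps (f - g)"
  for f g :: "'a::group_add fps"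
  by (simp add: even_fps_def)

lemma even_fps_1 [simp]: "even_fps 1"
  by (simp add: even_fps_def)

lemma even_fps_X_power: "even a \<Longrightarrow> even_fps (fps_X ^ a)"
  by (auto simp: even_fps_def)

lemma odd_fps_X_power: "odd a \<Longrightarrow> odd_fps (fps_X ^ a)"
  by (auto simp: odd_fps_def)

lemma odd_fps_sum: "(\<And>x. x \<in> A \<Longrightarrow> odd_fps (f x)) \<Longrightarrow> odd_fps (\<Sum>x\<in>A. f x)"
  by (simp add: odd_fps_def fps_sum_nth)

lemma even_odd_fps_eq_0: "even_fps f \<Longrightarrow> odd_fps f \<Longrightarrow> f = 0"
  by (rule fps_ext) (auto simp: even_fps_def odd_fps_def)

lemma even_fps_inverse:
  fixes f :: "'a::field fps"
  assumes f: "even_fps f" and f0: "f $ 0 \<noteq> 0"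
  shows "even_fps (inverse f)"
proof -
  define h where "h = Abs_fps (\<lambda>i. if even i then inverse f $ i else 0)"
  define r where "r = Abs_fps (\<lambda>i. if odd i then inverse f $ i else 0)"
  have split: "inverse f = h + r" by (rule fps_ext) (simp add: h_def r_def)
  have h: "even_fps h" by (simp add: even_fps_def h_def)
  have "f * h + f * r = 1"
    using inverse_mult_eq_1'[OF f0] by (simp add: split distrib_left)
  then have "f * r = 1 - f * h"
    by (metis add.commute eq_diff_eq)
  then have "even_fps (f * r)"
    using even_fps_diff[OF even_fps_1 even_fps_mult[OF f h]] by simp
  moreover have "odd_fps (f * r)"
    by (rule even_odd_fps_mult[OF f]) (simp add: odd_fps_def r_def)
  ultimately have "r = 0"
    using f0 even_odd_fps_eq_0 by fastforce
  then show ?thesis using h split by simp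
qed

lemma even_fps_qprod: "even c \<Longrightarrow> even d \<Longrightarrow> even_fps (qprod c d n)"
  by (induction n) (simp_all add: qprod_Suc even_fps_mult even_fps_add even_fps_X_power)

section \<open>The generating function of \<open>c\<^sub>2\<close> modulo 2\<close>

text \<open>Both sides of \<open>quadratic_sum_identity_agree\<close> expand into the double sum of these terms.\<close>

definition pair_term :: "nat \<Rightarrow> nat \<Rightarrow> bit fps" where
  "pair_term i k = X ^ (2 * (i + k)\<^sup>2 + 2 * i\<^sup>2) * inverse (qprod 4 4 i) * inverse (qprod 4 4 k)"

lemma quadratic_term_eq_pair_sum:
  "X ^ (2 * j\<^sup>2) * qprod 2 4 j * inverse (qprod 4 4 j) = (\<Sum>i\<le>j. pair_term i (j - i))"
  unfolding qprod_qbinom_expansion[of 2 4 j] sum_distrib_left sum_distrib_right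
proof (rule sum.cong)
  fix i assume "i \<in> {..j}"
  then have "i \<le> j" by simp
  have "qbinom 4 j i * inverse (qprod 4 4 j)
      = (qprod 4 4 j * inverse (qprod 4 4 j)) * (inverse (qprod 4 4 i) * inverse (qprod 4 4 (j - i)))"
    using qbinom_eq_qprod_quotient[of 4 i j] \<open>i \<le> j\<close> by (simp add: ac_simps)
  then have q: "qbinom 4 j i * inverse (qprod 4 4 j) = inverse (qprod 4 4 i) * inverse (qprod 4 4 (j - i))"
    by simp
  have e: "2 * j\<^sup>2 + (2 * i + 4 * tri i) = 2 * (i + (j - i))\<^sup>2 + 2 * i\<^sup>2"
    using \<open>i \<le> j\<close> tri_quadruple_add[of i] by simp
  show "X ^ (2 * j\<^sup>2) * (qbinom 4 j i * X ^ (2 * i + 4 * tri i)) * inverse (qprod 4 4 j) = pair_term i (j - i)"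
    unfolding pair_term_def e[symmetric] power_add using q by (simp add: ac_simps)
qed simp

lemma quadratic_sum_eq_pair_sum:
  "(\<Sum>j<M. X ^ (2 * j\<^sup>2) * qprod 2 4 j * inverse (qprod 4 4 j)) = (\<Sum>(i, k)\<in>{(i, k). i + k < M}. pair_term i k)"
  by (simp add: quadratic_term_eq_pair_sum sum.triangle_reindex)

lemma even_square_term_agree_pair_sum:
  assumes "n < M"
  shows "agree_below M (qprod 2 4 M * (X ^ (4 * n\<^sup>2) * inverse (qprod 2 2 (2 * n)))) (\<Sum>k<M. pair_term n k)"
proof -
  have "qprod 2 4 M * (X ^ (4 * n\<^sup>2) * inverse (qprod 2 2 (2 * n)))
      = (qprod 2 4 n * inverse (qprod 2 4 n)) * (X ^ (4 * n\<^sup>2) * qprod (2 + 4 * n) 4 (M - n) * inverse (qprod 4 4 n))"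
    using qprod_double[of 2 2 n] qprod_add[of 2 4 n "M - n"] assms by (simp add: fps_inverse_mult ac_simps)
  also have "\<dots> = X ^ (4 * n\<^sup>2) * qprod (2 + 4 * n) 4 (M - n) * inverse (qprod 4 4 n)"
    by simp
  also have "agree_below M \<dots>
      (X ^ (4 * n\<^sup>2) * (\<Sum>k<M. X ^ ((2 + 4 * n) * k + 4 * tri k) * inverse (qprod 4 4 k)) * inverse (qprod 4 4 n))"
  proof (intro agree_below_mult agree_below_refl)
    have "agree_below M (qprod (2 + 4 * n) 4 (M - n)) (qprod (2 + 4 * n) 4 M)"
      by (rule qprod_agree_below) (use assms in \<open>auto simp: min_def\<close>)
    also have "agree_below M \<dots> (\<Sum>k<M. X ^ ((2 + 4 * n) * k + 4 * tri k) * inverse (qprod 4 4 k))"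
      by (rule euler_identity_agree) simp_all
    finally show "agree_below M (qprod (2 + 4 * n) 4 (M - n))
        (\<Sum>k<M. X ^ ((2 + 4 * n) * k + 4 * tri k) * inverse (qprod 4 4 k))" .
  qed
  also have "X ^ (4 * n\<^sup>2) * (\<Sum>k<M. X ^ ((2 + 4 * n) * k + 4 * tri k) * inverse (qprod 4 4 k)) * inverse (qprod 4 4 n)
      = (\<Sum>k<M. pair_term n k)"
    unfolding sum_distrib_left sum_distrib_right
  proof (rule sum.cong)
    fix k
    have "4 * n\<^sup>2 + ((2 + 4 * n) * k + 4 * tri k) = 2 * (n + k)\<^sup>2 + 2 * n\<^sup>2"
      using tri_quadruple_add[of k] by (simp add: power2_eq_square algebra_simps)
    then show "X ^ (4 * n\<^sup>2) * (X ^ ((2 + 4 * n) * k + 4 * tri k) * inverse (qprod 4 4 k)) * inverse (qprod 4 4 n)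
        = pair_term n k"
      unfolding pair_term_def by (simp add: ac_simps flip: power_add)
  qed simp
  finally show ?thesis .
qed

theorem quadratic_sum_identity_agree:
  "agree_below M (\<Sum>j<M. X ^ (2 * j\<^sup>2) * qprod 2 4 j * inverse (qprod 4 4 j))
     (qprod 2 4 M * (\<Sum>n<M. X ^ (4 * n\<^sup>2) * inverse (qprod 2 2 (2 * n))))"
proof -
  have "agree_below M (qprod 2 4 M * (\<Sum>n<M. X ^ (4 * n\<^sup>2) * inverse (qprod 2 2 (2 * n))))
      (\<Sum>n<M. \<Sum>k<M. pair_term n k)"
    unfolding sum_distrib_left by (rule agree_below_sum) (simp add: even_square_term_agree_pair_sum)
  also have "(\<Sum>n<M. \<Sum>k<M. pair_term n k) = (\<Sum>(i, k)\<in>{..<M} \<times> {..<M}. pair_term i k)"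
    by (simp add: sum.cartesian_product)
  also have "agree_below M \<dots> (\<Sum>(i, k)\<in>{(i, k). i + k < M}. pair_term i k)"
  proof (rule agree_below_sum_subset)
    fix p assume "p \<in> {..<M} \<times> {..<M} - {(i, k). i + k < M}"
    then obtain i k where p: "p = (i, k)" and ik: "M \<le> i + k" by force
    have "i + k \<le> (i + k)\<^sup>2" by (simp add: power2_eq_square)
    with ik have "M \<le> 2 * (i + k)\<^sup>2 + 2 * i\<^sup>2" by linarith
    then have "agree_below M (X ^ (2 * (i + k)\<^sup>2 + 2 * i\<^sup>2) * (inverse (qprod 4 4 i) * inverse (qprod 4 4 k))) 0"
      by (rule agree_below_X_power_mult)
    then show "agree_below M (case p of (i, k) \<Rightarrow> pair_term i k) 0"
      by (simp add: p pair_term_def mult.assoc)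
  qed auto
  finally show ?thesis
    unfolding quadratic_sum_eq_pair_sum by (rule agree_below_sym)
qed

text \<open>\<open>c2_gf_term M j\<close> is \<open>X\<^bsup>2j\<^sup>2\<^esup> (-X\<^bsup>4j+4\<^esup>; X\<^sup>4)\<^sub>M / (X\<^bsup>4j+2\<^esup>; X\<^sup>4)\<^sub>M\<close>; for \<open>M > 2N\<close> its coefficient
  of \<open>X\<^bsup>2N\<^esup>\<close> is the number, mod 2, of partitions \<open>\<lambda>\<close> of \<open>N\<close> with \<open>c2_cond j \<lambda>\<close>.\<close>

definition c2_gf_term :: "nat \<Rightarrow> nat \<Rightarrow> bit fps" where
  "c2_gf_term M j = X ^ (2 * j\<^sup>2) * qprod (4 + 4 * j) 4 M * inverse (qprod (2 + 4 * j) 4 M)"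

lemma c2_gf_term_agree:
  "agree_below M (c2_gf_term M j)
     (qprod 4 4 M * inverse (qprod 2 4 M) * (X ^ (2 * j\<^sup>2) * qprod 2 4 j * inverse (qprod 4 4 j)))"
proof -
  have num: "qprod (4 + 4 * j) 4 M = inverse (qprod 4 4 j) * qprod 4 4 (j + M)"
    using qprod_add[of 4 4 j M] by (simp add: mult.assoc[symmetric])
  have den: "inverse (qprod (2 + 4 * j) 4 M) = qprod 2 4 j * inverse (qprod 2 4 (j + M))"
    using qprod_add[of 2 4 j M] by (simp add: fps_inverse_mult mult.assoc[symmetric])
  have "agree_below M (qprod 4 4 (j + M)) (qprod 4 4 M)"
    by (rule qprod_agree_below) (simp add: min_def)
  moreover have "agree_below M (inverse (qprod 2 4 (j + M))) (inverse (qprod 2 4 M))"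
    by (rule agree_below_inverse) (rule qprod_agree_below, simp_all add: min_def)
  ultimately have "agree_below M (qprod 4 4 (j + M) * inverse (qprod 2 4 (j + M))
        * (X ^ (2 * j\<^sup>2) * qprod 2 4 j * inverse (qprod 4 4 j)))
      (qprod 4 4 M * inverse (qprod 2 4 M) * (X ^ (2 * j\<^sup>2) * qprod 2 4 j * inverse (qprod 4 4 j)))"
    by (intro agree_below_mult agree_below_refl)
  then show ?thesis
    unfolding c2_gf_term_def num den by (simp only: ac_simps)
qed

lemma c2_gf_with_0_agree:
  "agree_below M (\<Sum>j<M. c2_gf_term M j) (qprod 4 4 M * (\<Sum>n<M. X ^ (4 * n\<^sup>2) * inverse (qprod 2 2 (2 * n))))"
proof -
  have "agree_below M (\<Sum>j<M. c2_gf_term M j) (qprod 4 4 M * inverse (qprod 2 4 M)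
      * (\<Sum>j<M. X ^ (2 * j\<^sup>2) * qprod 2 4 j * inverse (qprod 4 4 j)))"
    unfolding sum_distrib_left by (rule agree_below_sum) (rule c2_gf_term_agree)
  also have "agree_below M \<dots> (qprod 4 4 M * inverse (qprod 2 4 M)
      * (qprod 2 4 M * (\<Sum>n<M. X ^ (4 * n\<^sup>2) * inverse (qprod 2 2 (2 * n)))))"
    by (intro agree_below_mult agree_below_refl quadratic_sum_identity_agree)
  also have "\<dots> = (qprod 2 4 M * inverse (qprod 2 4 M))
      * (qprod 4 4 M * (\<Sum>n<M. X ^ (4 * n\<^sup>2) * inverse (qprod 2 2 (2 * n))))"
    by (simp only: ac_simps)
  finally show ?thesis by simp
qed

lemma euler_gauss_agree:
  "agree_below M (qprod 4 4 M * (\<Sum>m<M. X ^ m\<^sup>2 * inverse (qprod 2 2 m))) (psi_series 1)"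
proof -
  have "agree_below M (qprod 4 4 M * qprod 1 2 M) (qprod 4 4 M * (\<Sum>m<M. X ^ m\<^sup>2 * inverse (qprod 2 2 m)))"
    using euler_identity_agree[of 1 2 M] tri_double_add
    by (intro agree_below_mult agree_below_refl) (simp add: add.commute)
  then show ?thesis
    using agree_below_trans[OF agree_below_sym gauss_identity_agree[of 1 M]] by simp
qed

lemma even_square_sum_agree:
  "agree_below M (\<Sum>n<M. X ^ (4 * n\<^sup>2) * inverse (qprod 2 2 (2 * n)))
     (\<Sum>m\<in>{m. m < M \<and> even m}. X ^ m\<^sup>2 * inverse (qprod 2 2 m))"
proof -
  have "agree_below M (\<Sum>n<M. X ^ (2 * n)\<^sup>2 * inverse (qprod 2 2 (2 * n)))
      (\<Sum>n\<in>{n. 2 * n < M}. X ^ (2 * n)\<^sup>2 * inverse (qprod 2 2 (2 * n)))"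
  proof (rule agree_below_sum_subset)
    fix n assume "n \<in> {..<M} - {n. 2 * n < M}"
    then have "M \<le> 2 * n" by simp
    also have "\<dots> \<le> (2 * n)\<^sup>2" by (simp add: power2_eq_square le_square)
    finally show "agree_below M (X ^ (2 * n)\<^sup>2 * inverse (qprod 2 2 (2 * n))) 0"
      by (rule agree_below_X_power_mult)
  qed auto
  also have "(\<Sum>n\<in>{n. 2 * n < M}. X ^ (2 * n)\<^sup>2 * inverse (qprod 2 2 (2 * n)))
      = (\<Sum>m\<in>{m. m < M \<and> even m}. X ^ m\<^sup>2 * inverse (qprod 2 2 m))"
    by (rule sum.reindex_bij_witness[where i = "\<lambda>m. m div 2" and j = "\<lambda>n. 2 * n"]) auto
  finally show ?thesis
    by (simp add: power_mult_distrib)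
qed

lemma odd_fps_odd_square_sum:
  "(\<And>m. m \<in> B \<Longrightarrow> odd m) \<Longrightarrow> odd_fps (\<Sum>m\<in>B. X ^ m\<^sup>2 * inverse (qprod 2 2 m))"
proof (rule odd_fps_sum)
  fix m assume "\<And>m. m \<in> B \<Longrightarrow> odd m" "m \<in> B"
  then have "odd_fps (inverse (qprod 2 2 m) * X ^ m\<^sup>2)"
    by (intro even_odd_fps_mult even_fps_inverse even_fps_qprod odd_fps_X_power) simp_all
  then show "odd_fps (X ^ m\<^sup>2 * inverse (qprod 2 2 m))"
    by (simp add: mult.commute)
qed

lemma even_square_sum_even_coeff:
  assumes "2 * N < M"
  shows "(qprod 4 4 M * (\<Sum>n<M. X ^ (4 * n\<^sup>2) * inverse (qprod 2 2 (2 * n)))) $ (2 * N) = psi_series 1 $ (2 * N)"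
proof -
  define f where "f m = X ^ m\<^sup>2 * inverse (qprod 2 2 m)" for m
  define A where "A = {m. m < M \<and> even m}"
  define B where "B = {m. m < M \<and> odd m}"
  have "(\<Sum>m<M. f m) = (\<Sum>m\<in>A. f m) + (\<Sum>m\<in>B. f m)"
  proof -
    have "{..<M} = A \<union> B" "A \<inter> B = {}" by (auto simp: A_def B_def)
    moreover have "finite A" "finite B" by (simp_all add: A_def B_def)
    ultimately show ?thesis by (simp add: sum.union_disjoint)
  qed
  then have total: "agree_below M (qprod 4 4 M * (\<Sum>m\<in>A. f m) + qprod 4 4 M * (\<Sum>m\<in>B. f m)) (psi_series 1)"
    using euler_gauss_agree[of M] by (simp add: f_def distrib_left)
  have "(qprod 4 4 M * (\<Sum>n<M. X ^ (4 * n\<^sup>2) * inverse (qprod 2 2 (2 * n)))) $ (2 * N)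
      = (qprod 4 4 M * (\<Sum>m\<in>A. f m)) $ (2 * N)"
    using agree_belowD[OF agree_below_mult[OF agree_below_refl even_square_sum_agree]] assms
    by (simp add: f_def A_def)
  also have "\<dots> = (qprod 4 4 M * (\<Sum>m\<in>A. f m) + qprod 4 4 M * (\<Sum>m\<in>B. f m)) $ (2 * N)"
    using even_odd_fps_mult[OF even_fps_qprod odd_fps_odd_square_sum, of 4 4 B M]
    by (simp add: f_def B_def odd_fps_def)
  also have "\<dots> = psi_series 1 $ (2 * N)"
    using agree_belowD[OF total] assms by blast
  finally show ?thesis .
qed

lemma c2_gf_with_0_even_coeff: "2 * N < M \<Longrightarrow> (\<Sum>j<M. c2_gf_term M j) $ (2 * N) = psi_series 1 $ (2 * N)"
  using agree_belowD[OF c2_gf_with_0_agree] even_square_sum_even_coeff by simp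

lemma c2_gf_term_0_even_coeff:
  assumes "2 * N < M"
  shows "c2_gf_term M 0 $ (2 * N) = psi_series 2 $ (2 * N)"
proof -
  have "c2_gf_term M 0 = qprod 4 4 M * inverse (qprod 2 4 M)"
    by (simp add: c2_gf_term_def)
  also have "agree_below M \<dots> (qprod 4 4 (2 * M) * inverse (qprod 2 4 M))"
    by (intro agree_below_mult agree_below_refl qprod_agree_below) (simp add: min_def)
  also have "qprod 4 4 (2 * M) * inverse (qprod 2 4 M)
      = qprod 2 4 M * qprod 2 4 M * qprod 8 8 M * inverse (qprod 2 4 M)"
    using qprod_double[of 4 4 M] qprod_square[of 2 4 M] by simp
  also have "\<dots> = (qprod 2 4 M * inverse (qprod 2 4 M)) * (qprod 8 8 M * qprod 2 4 M)"
    by (simp only: ac_simps)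
  also have "\<dots> = qprod 8 8 M * qprod 2 4 M"
    by simp
  also have "agree_below M \<dots> (psi_series 2)"
    using gauss_identity_agree[of 2 M] by simp
  finally show ?thesis
    using assms by (simp add: agree_below_def)
qed

lemma c2_gf_even_coeff:
  assumes "2 * N < M"
  shows "(\<Sum>j\<in>{1..<M}. c2_gf_term M j) $ (2 * N) = psi_series 1 $ (2 * N) + psi_series 2 $ (2 * N)"
proof -
  have "{..<M} = insert 0 {1..<M}" using assms by auto
  then have "(\<Sum>j\<in>{1..<M}. c2_gf_term M j) = (\<Sum>j<M. c2_gf_term M j) - c2_gf_term M 0"
    by simp
  then show ?thesis
    using c2_gf_with_0_even_coeff[OF assms] c2_gf_term_0_even_coeff[OF assms] by simp
qed

section \<open>Partitions with restricted multiplicities\<close>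

definition restricted_partitions :: "nat set \<Rightarrow> (nat \<Rightarrow> nat set) \<Rightarrow> nat \<Rightarrow> nat multiset set" where
  "restricted_partitions S R n =
     {lam. set_mset lam \<subseteq> S \<and> (\<forall>s\<in>S. count lam s \<in> R s) \<and> sum_mset lam = n}"

lemma finite_restricted_partitions:
  assumes "finite S" "0 \<notin> S"
  shows "finite (restricted_partitions S R n)"
proof (rule finite_subset)
  show "restricted_partitions S R n \<subseteq> (\<Union>m\<le>n. multisets_of_size S m)"
  proof
    fix lam assume lam: "lam \<in> restricted_partitions S R n"
    then have "\<forall>p\<in>#lam. 1 \<le> p"
      using assms(2) by (auto simp: restricted_partitions_def Suc_le_eq intro: gr0I)
    then have "size lam \<le> sum_mset lam"
      using sum_mset_mono[of lam "\<lambda>_. 1" id] by simp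
    then show "lam \<in> (\<Union>m\<le>n. multisets_of_size S m)"
      using lam by (auto simp: restricted_partitions_def multisets_of_size_def)
  qed
qed (use assms(1) in auto)

lemma count_restricted_partitions_notin:
  "l \<in> restricted_partitions S R m \<Longrightarrow> s \<notin> S \<Longrightarrow> count l s = 0"
  by (auto simp: restricted_partitions_def count_eq_zero_iff)

lemma restricted_partitions_insert:
  assumes "s \<notin> S"
  shows "restricted_partitions (insert s S) R n
    = (\<Union>k\<in>{k\<in>R s. s * k \<le> n}. (\<lambda>l. l + replicate_mset k s) ` restricted_partitions S R (n - s * k))"
    (is "?L = ?R")
proof
  show "?L \<subseteq> ?R"
  proof
    fix lam assume "lam \<in> ?L"
    then have lam: "set_mset lam \<subseteq> insert s S" "\<forall>t\<in>insert s S. count lam t \<in> R t" "sum_mset lam = n"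
      by (simp_all add: restricted_partitions_def)
    define k where "k = count lam s"
    define l where "l = filter_mset (\<lambda>x. x \<noteq> s) lam"
    have split: "lam = l + replicate_mset k s"
      using multiset_partition[of lam "\<lambda>x. x = s"] by (simp add: l_def k_def filter_eq_replicate_mset add.commute)
    then have sum: "n = sum_mset l + s * k"
      using lam(3) by (simp add: mult.commute)
    have "set_mset l \<subseteq> S"
      using lam(1) by (auto simp: l_def)
    moreover have "count l t \<in> R t" if "t \<in> S" for t
      using that assms lam(2) by (auto simp: l_def)
    ultimately have "l \<in> restricted_partitions S R (n - s * k)"
      using sum by (simp add: restricted_partitions_def)
    moreover have "k \<in> R s" "s * k \<le> n"
      using lam(2) sum by (simp_all add: k_def)
    ultimately show "lam \<in> ?R"
      using split by blast
  qed
next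
  show "?R \<subseteq> ?L"
  proof
    fix lam assume "lam \<in> ?R"
    then obtain k l where k: "k \<in> R s" "s * k \<le> n" and l: "l \<in> restricted_partitions S R (n - s * k)"
      and lam: "lam = l + replicate_mset k s" by blast
    have l': "set_mset l \<subseteq> S" "\<forall>t\<in>S. count l t \<in> R t" "sum_mset l = n - s * k"
      using l by (simp_all add: restricted_partitions_def)
    have "count l s = 0" using l assms by (rule count_restricted_partitions_notin)
    have "set_mset lam \<subseteq> insert s S" using l'(1) by (auto simp: lam)
    moreover have "count lam t \<in> R t" if "t \<in> insert s S" for t
      using that \<open>count l s = 0\<close> k(1) l'(2) assms by (auto simp: lam)
    moreover have "sum_mset lam = n" using l'(3) k(2) by (simp add: lam mult.commute)
    ultimately show "lam \<in> ?L" by (simp add: restricted_partitions_def)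
  qed
qed

lemma card_restricted_partitions_insert:
  assumes "finite S" "0 \<notin> insert s S" "s \<notin> S"
  shows "card (restricted_partitions (insert s S) R n)
    = (\<Sum>k\<in>{k\<in>R s. s * k \<le> n}. card (restricted_partitions S R (n - s * k)))"
proof -
  define A where "A k = (\<lambda>l. l + replicate_mset k s) ` restricted_partitions S R (n - s * k)" for k
  have "k \<le> n" if "s * k \<le> n" for k
  proof -
    have "k \<le> s * k" using assms(2) by simp
    then show ?thesis using that by linarith
  qed
  then have "{k\<in>R s. s * k \<le> n} \<subseteq> {..n}"
    by auto
  then have fin: "finite {k\<in>R s. s * k \<le> n}"
    by (rule finite_subset) simp
  have disj: "A i \<inter> A j = {}" if "i \<noteq> j" for i j
  proof (rule equals0I)
    fix x assume "x \<in> A i \<inter> A j"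
    then obtain l1 l2 where l1: "l1 \<in> restricted_partitions S R (n - s * i)" "x = l1 + replicate_mset i s"
      and l2: "l2 \<in> restricted_partitions S R (n - s * j)" "x = l2 + replicate_mset j s"
      by (auto simp: A_def)
    have "count x s = i"
      using count_restricted_partitions_notin[OF l1(1) assms(3)] by (simp add: l1(2))
    moreover have "count x s = j"
      using count_restricted_partitions_notin[OF l2(1) assms(3)] by (simp add: l2(2))
    ultimately show False using that by simp
  qed
  have "card (\<Union>k\<in>{k\<in>R s. s * k \<le> n}. A k) = (\<Sum>k\<in>{k\<in>R s. s * k \<le> n}. card (A k))"
    using fin disj assms(1,2) finite_restricted_partitions by (intro card_UN_disjoint) (auto simp: A_def)
  also have "\<dots> = (\<Sum>k\<in>{k\<in>R s. s * k \<le> n}. card (restricted_partitions S R (n - s * k)))"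
    by (simp add: A_def card_image inj_on_def)
  finally show ?thesis
    by (simp add: restricted_partitions_insert[OF assms(3)] A_def)
qed

lemma fps_X_power_mult_scaled_nth:
  "0 < w \<Longrightarrow> (fps_X ^ (w * a) * f) $ (w * n) = (if a \<le> n then f $ (w * (n - a)) else (0 :: 'a::comm_semiring_1))"
  by (simp add: fps_X_power_mult_nth diff_mult_distrib2)

text \<open>Cutting the multiplicities at \<open>K\<close> keeps the factors finite; \<open>w\<close> rescales all exponents,
  as \<open>c\<^sub>2(N)\<close> is read off at \<open>X\<^bsup>2N\<^esup>\<close>.\<close>

lemma restricted_partitions_gf:
  assumes "finite S" "0 \<notin> S" "0 < w" "n \<le> K"
  shows "of_nat (card (restricted_partitions S R n))
    = ((\<Prod>s\<in>S. \<Sum>k\<in>{k\<in>R s. k \<le> K}. fps_X ^ (w * s * k)) :: 'a::comm_semiring_1 fps) $ (w * n)"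
  using assms(1,2,4)
proof (induction S arbitrary: n rule: finite_induct)
  case empty
  have "restricted_partitions {} R n = (if n = 0 then {{#}} else {})"
    by (auto simp: restricted_partitions_def)
  then show ?case using assms(3) by simp
next
  case (insert s S)
  define P :: "'a fps" where "P = (\<Prod>s\<in>S. \<Sum>k\<in>{k\<in>R s. k \<le> K}. fps_X ^ (w * s * k))"
  have "of_nat (card (restricted_partitions (insert s S) R n))
      = (\<Sum>k\<in>{k\<in>R s. s * k \<le> n}. (of_nat (card (restricted_partitions S R (n - s * k))) :: 'a))"
    using card_restricted_partitions_insert[OF insert(1,4,2)] by simp
  also have "\<dots> = (\<Sum>k\<in>{k\<in>R s. s * k \<le> n}. P $ (w * (n - s * k)))"
    using insert by (simp add: P_def)
  also have "\<dots> = (\<Sum>k\<in>{k\<in>R s. k \<le> K}. (fps_X ^ (w * (s * k)) * P) $ (w * n))"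
  proof -
    have "k \<le> K" if "s * k \<le> n" for k
    proof -
      have "k \<le> s * k" using insert(4) by simp
      then show ?thesis using that insert(5) by linarith
    qed
    then have "{k\<in>R s. s * k \<le> n} = {k\<in>{k\<in>R s. k \<le> K}. s * k \<le> n}" by auto
    moreover have "finite {k\<in>R s. k \<le> K}"
      by (rule finite_subset[of _ "{..K}"]) auto
    ultimately have "(\<Sum>k\<in>{k\<in>R s. s * k \<le> n}. P $ (w * (n - s * k)))
        = (\<Sum>k\<in>{k\<in>R s. k \<le> K}. if s * k \<le> n then P $ (w * (n - s * k)) else 0)"
      by (simp only: sum.inter_filter)
    then show ?thesis
      using assms(3) by (simp add: fps_X_power_mult_scaled_nth)
  qed
  also have "\<dots> = (\<Prod>s\<in>insert s S. \<Sum>k\<in>{k\<in>R s. k \<le> K}. fps_X ^ (w * s * k)) $ (w * n)"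
    using insert(1,2) by (simp add: P_def sum_distrib_right fps_sum_nth mult.assoc)
  finally show ?case .
qed

definition c2_mult :: "nat \<Rightarrow> nat \<Rightarrow> nat set" where
  "c2_mult j s = (if odd s \<and> s < 2 * j then {1} else if even s \<and> s \<le> 2 * j then {0}
     else if even s then {0, 1} else UNIV)"

lemma c2_cond_iff_c2_mult:
  assumes "1 \<le> j" "j \<le> N" "set_mset lam \<subseteq> {1..2 * N}"
  shows "c2_cond j lam \<longleftrightarrow> (\<forall>s\<in>{1..2 * N}. count lam s \<in> c2_mult j s)"
proof
  assume c: "c2_cond j lam"
  show "\<forall>s\<in>{1..2 * N}. count lam s \<in> c2_mult j s"
  proof
    fix s assume "s \<in> {1..2 * N}"
    consider "odd s" "s < 2 * j" | "even s" | "odd s" "2 * j \<le> s" by linarith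
    then show "count lam s \<in> c2_mult j s"
    proof cases
      case 1
      then obtain i where i: "s = 2 * i - 1" "i \<in> {1..j}"
        by (intro that[of "(s + 1) div 2"]) (auto elim!: oddE)
      then have "count lam s = 1"
        using c by (simp add: c2_cond_def)
      then show ?thesis using 1 by (simp add: c2_mult_def)
    next
      case 2
      then have "count lam s = 0 \<or> (2 * j < s \<and> count lam s = 1)"
        using c by (auto simp: c2_cond_def count_eq_zero_iff)
      then show ?thesis using 2 by (auto simp: c2_mult_def)
    qed (simp add: c2_mult_def)
  qed
next
  assume m: "\<forall>s\<in>{1..2 * N}. count lam s \<in> c2_mult j s"
  have "count lam (2 * i - 1) = 1" if "i \<in> {1..j}" for i
  proof -
    have "2 * i - 1 \<in> {1..2 * N}" "odd (2 * i - 1)" "2 * i - 1 < 2 * j"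
      using that assms(2) by auto
    then show ?thesis using m[rule_format, of "2 * i - 1"] by (simp add: c2_mult_def)
  qed
  moreover have "2 * j < p \<and> count lam p = 1" if "p \<in># lam" "even p" for p
  proof -
    have "count lam p \<in> c2_mult j p" "count lam p \<noteq> 0"
      using that assms(3) m by auto
    then show ?thesis
      using that(2) by (cases "p \<le> 2 * j") (auto simp: c2_mult_def)
  qed
  ultimately show "c2_cond j lam"
    using assms(1) by (simp add: c2_cond_def)
qed

lemma member_le_sum_mset: "(p :: nat) \<in># lam \<Longrightarrow> p \<le> sum_mset lam"
  using sum_mset.remove[of p lam] by simp

lemma c2_pairs_eq_Sigma:
  "{(j, lam). is_partition lam N \<and> c2_cond j lam}
    = (SIGMA j:{1..N}. restricted_partitions {1..2 * N} (c2_mult j) N)"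
proof -
  have parts: "set_mset lam \<subseteq> {1..2 * N}" if "is_partition lam N" for lam
    using that member_le_sum_mset by (fastforce simp: is_partition_def Suc_le_eq)
  have bound: "j \<le> N" if "is_partition lam N" "c2_cond j lam" for j lam
  proof -
    have "count lam (2 * j - 1) = 1" using that(2) by (simp add: c2_cond_def)
    then have "2 * j - 1 \<in># lam" by (metis count_eq_zero_iff zero_neq_one)
    then have "2 * j - 1 \<le> N"
      using that(1) member_le_sum_mset by (auto simp: is_partition_def)
    then show ?thesis using that(2) by (simp add: c2_cond_def)
  qed
  show ?thesis
  proof (intro set_eqI iffI)
    fix x assume "x \<in> {(j, lam). is_partition lam N \<and> c2_cond j lam}"
    then obtain j lam where x: "x = (j, lam)" "is_partition lam N" "c2_cond j lam" by blast
    moreover from x have "j \<in> {1..N}"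
      using bound by (auto simp: c2_cond_def)
    ultimately show "x \<in> (SIGMA j:{1..N}. restricted_partitions {1..2 * N} (c2_mult j) N)"
      using parts c2_cond_iff_c2_mult[of j N lam] by (auto simp: restricted_partitions_def is_partition_def)
  next
    fix x assume "x \<in> (SIGMA j:{1..N}. restricted_partitions {1..2 * N} (c2_mult j) N)"
    then obtain j lam where x: "x = (j, lam)" "j \<in> {1..N}"
      and lam: "lam \<in> restricted_partitions {1..2 * N} (c2_mult j) N" by blast
    then have "is_partition lam N"
      by (auto simp: restricted_partitions_def is_partition_def)
    moreover have "c2_cond j lam"
      using x lam c2_cond_iff_c2_mult[of j N lam] by (simp add: restricted_partitions_def)
    ultimately show "x \<in> {(j, lam). is_partition lam N \<and> c2_cond j lam}"
      using x by simp
  qed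
qed

lemma c2_eq_sum_card: "c2 N = (\<Sum>j\<in>{1..N}. card (restricted_partitions {1..2 * N} (c2_mult j) N))"
  unfolding c2_def c2_pairs_eq_Sigma
  by (rule card_SigmaI) (auto intro: finite_restricted_partitions)

definition c2_factor :: "nat \<Rightarrow> nat \<Rightarrow> nat \<Rightarrow> bit fps" where
  "c2_factor j N s = (\<Sum>k\<in>{k\<in>c2_mult j s. k \<le> N}. X ^ (2 * s * k))"

lemma c2_eq_coeff_prod_c2_factor:
  "of_nat (card (restricted_partitions {1..2 * N} (c2_mult j) N)) = (\<Prod>s\<in>{1..2 * N}. c2_factor j N s) $ (2 * N)"
  unfolding c2_factor_def by (rule restricted_partitions_gf) auto

lemma c2_factor_odd:
  assumes "0 < N"
  shows "c2_factor j N (2 * i + 1) = (if i < j then X ^ (4 * i + 2) else (\<Sum>k\<le>N. X ^ ((4 * i + 2) * k)))"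
proof (cases "i < j")
  case True
  then have "{k\<in>c2_mult j (2 * i + 1). k \<le> N} = {1}" using assms by (auto simp: c2_mult_def)
  then show ?thesis using True by (simp add: c2_factor_def)
next
  case False
  then have "{k\<in>c2_mult j (2 * i + 1). k \<le> N} = {..N}" by (auto simp: c2_mult_def)
  then show ?thesis using False by (simp add: c2_factor_def)
qed

lemma c2_factor_even:
  assumes "0 < N"
  shows "c2_factor j N (2 * i + 2) = (if i < j then 1 else 1 + X ^ (4 * i + 4))"
proof (cases "i < j")
  case True
  then have "{k\<in>c2_mult j (2 * i + 2). k \<le> N} = {0}" by (auto simp: c2_mult_def)
  then show ?thesis using True by (simp add: c2_factor_def)
next
  case False
  then have "{k\<in>c2_mult j (2 * i + 2). k \<le> N} = {0, 1}" using assms by (auto simp: c2_mult_def)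
  then show ?thesis using False by (simp add: c2_factor_def)
qed

lemma prod_atLeastAtMost_double:
  "(\<Prod>s\<in>{1..2 * N}. f s) = (\<Prod>i<N. f (2 * i + 1) * f (2 * i + 2))" for f :: "nat \<Rightarrow> 'a::comm_monoid_mult"
proof (induction N)
  case (Suc N)
  have "{1..2 * Suc N} = insert (2 * N + 2) (insert (2 * N + 1) {1..2 * N})" by auto
  then show ?case using Suc by (simp add: ac_simps)
qed simp

lemma geometric_sum_agree_inverse:
  assumes "0 < a" "M \<le> a * (N + 1)"
  shows "agree_below M (\<Sum>k\<le>N. X ^ (a * k)) (inverse (1 + X ^ a))"
proof -
  have tele: "(1 + X ^ a) * (\<Sum>k\<le>N. X ^ (a * k)) = 1 + X ^ (a * (N + 1))"
  proof (induction N)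
    case (Suc N)
    have "(1 + X ^ a) * (\<Sum>k\<le>Suc N. X ^ (a * k)) = (1 + X ^ (a * (N + 1))) + X ^ (a * (N + 1)) * (1 + X ^ a)"
      using Suc by (simp add: distrib_left ac_simps)
    also have "\<dots> = 1 + X ^ (a * (N + 1) + a)" by (rule one_plus_X_power_add)
    finally show ?case by (simp add: algebra_simps)
  qed simp
  have "agree_below M (inverse (1 + X ^ a) * ((1 + X ^ a) * (\<Sum>k\<le>N. X ^ (a * k)))) (inverse (1 + X ^ a) * 1)"
    unfolding tele using assms(2) by (intro agree_below_mult) (simp_all add: agree_below_def)
  then show ?thesis
    using assms(1) by (simp add: mult.assoc[symmetric] inverse_mult_eq_1)
qed

lemma c2_odd_factors_agree:
  assumes "1 \<le> j" "j \<le> N"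
  shows "agree_below (2 * N + 1) (\<Prod>i<N. c2_factor j N (2 * i + 1))
    (X ^ (2 * j\<^sup>2) * inverse (qprod (2 + 4 * j) 4 (N - j)))"
proof -
  have N: "N = j + (N - j)" using assms(2) by simp
  have "(\<Prod>i<j. c2_factor j N (2 * i + 1)) = (\<Prod>i<j. X ^ (4 * i + 2))"
    by (rule prod.cong) (use assms in \<open>auto simp only: c2_factor_odd lessThan_iff if_True\<close>)
  also have "\<dots> = X ^ (\<Sum>i<j. 4 * i + 2)"
    by (simp add: power_sum)
  also have "(\<Sum>i<j. 4 * i + 2) = 4 * tri j + 2 * j"
    by (induction j) simp_all
  also have "\<dots> = 2 * j\<^sup>2"
    by (rule tri_quadruple_add)
  finally have small: "(\<Prod>i<j. c2_factor j N (2 * i + 1)) = X ^ (2 * j\<^sup>2)" .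
  have large: "agree_below (2 * N + 1) (\<Prod>l<N - j. c2_factor j N (2 * (j + l) + 1))
      (inverse (qprod (2 + 4 * j) 4 (N - j)))"
    unfolding inverse_qprod
  proof (rule agree_below_prod)
    fix l assume "l \<in> {..<N - j}"
    have "2 * N + 1 \<le> (2 + 4 * j + 4 * l) * (N + 1)" by (simp add: algebra_simps)
    then have "agree_below (2 * N + 1) (\<Sum>k\<le>N. X ^ ((2 + 4 * j + 4 * l) * k))
        (inverse (1 + X ^ (2 + 4 * j + 4 * l)))"
      by (intro geometric_sum_agree_inverse) simp_all
    moreover have "c2_factor j N (2 * (j + l) + 1) = (\<Sum>k\<le>N. X ^ ((2 + 4 * j + 4 * l) * k))"
      using assms by (subst c2_factor_odd) (simp_all add: algebra_simps)
    ultimately show "agree_below (2 * N + 1) (c2_factor j N (2 * (j + l) + 1)) (inverse (1 + X ^ (2 + 4 * j + 4 * l)))"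
      by simp
  qed
  show ?thesis
    by (subst N, subst prod_lessThan_add) (simp only: small agree_below_mult[OF agree_below_refl large])
qed

lemma c2_even_factors:
  assumes "1 \<le> j" "j \<le> N"
  shows "(\<Prod>i<N. c2_factor j N (2 * i + 2)) = qprod (4 + 4 * j) 4 (N - j)"
proof -
  have "(\<Prod>i<N. c2_factor j N (2 * i + 2))
      = (\<Prod>i<j. c2_factor j N (2 * i + 2)) * (\<Prod>l<N - j. c2_factor j N (2 * (j + l) + 2))"
    using prod_lessThan_add[of "\<lambda>i. c2_factor j N (2 * i + 2)" j "N - j"] assms(2) by simp
  also have "\<dots> = 1 * (\<Prod>l<N - j. 1 + X ^ (4 + 4 * j + 4 * l))"
  proof (intro arg_cong2[where f = "(*)"] prod.neutral prod.cong ballI refl)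
    show "c2_factor j N (2 * i + 2) = 1" if "i \<in> {..<j}" for i
      using that assms by (subst c2_factor_even) simp_all
    show "c2_factor j N (2 * (j + l) + 2) = 1 + X ^ (4 + 4 * j + 4 * l)" for l
      using assms by (subst c2_factor_even) (simp_all add: algebra_simps)
  qed
  also have "\<dots> = qprod (4 + 4 * j) 4 (N - j)"
    by (simp add: qprod_def)
  finally show ?thesis .
qed

lemma c2_factors_agree_c2_gf_term:
  assumes "1 \<le> j" "j \<le> N"
  shows "agree_below (2 * N + 1) (\<Prod>s\<in>{1..2 * N}. c2_factor j N s) (c2_gf_term (2 * N + 1) j)"
proof -
  have "agree_below (2 * N + 1) (\<Prod>s\<in>{1..2 * N}. c2_factor j N s)
      (X ^ (2 * j\<^sup>2) * inverse (qprod (2 + 4 * j) 4 (N - j)) * qprod (4 + 4 * j) 4 (N - j))"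
    unfolding prod_atLeastAtMost_double prod.distrib c2_even_factors[OF assms]
    by (intro agree_below_mult agree_below_refl c2_odd_factors_agree assms)
  also have "\<dots> = X ^ (2 * j\<^sup>2) * qprod (4 + 4 * j) 4 (N - j) * inverse (qprod (2 + 4 * j) 4 (N - j))"
    by (simp only: ac_simps)
  also have "agree_below (2 * N + 1) \<dots> (c2_gf_term (2 * N + 1) j)"
    unfolding c2_gf_term_def using assms
    by (intro agree_below_mult agree_below_refl agree_below_inverse qprod_agree_below)
      (simp_all add: min_def le_diff_conv2)
  finally show ?thesis by (simp only: ac_simps)
qed

lemma c2_eq_coeff_c2_gf: "of_nat (c2 N) = (\<Sum>j\<in>{1..<2 * N + 1}. c2_gf_term (2 * N + 1) j) $ (2 * N)"
proof -
  have "(of_nat (c2 N) :: bit) = (\<Sum>j\<in>{1..N}. (\<Prod>s\<in>{1..2 * N}. c2_factor j N s) $ (2 * N))"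
    unfolding c2_eq_sum_card of_nat_sum c2_eq_coeff_prod_c2_factor ..
  also have "\<dots> = (\<Sum>j\<in>{1..N}. c2_gf_term (2 * N + 1) j) $ (2 * N)"
  proof (subst fps_sum_nth, rule sum.cong)
    fix j assume "j \<in> {1..N}"
    then show "(\<Prod>s\<in>{1..2 * N}. c2_factor j N s) $ (2 * N) = c2_gf_term (2 * N + 1) j $ (2 * N)"
      using agree_belowD[OF c2_factors_agree_c2_gf_term, of j N "2 * N"] by simp
  qed simp
  also have "agree_below (2 * N + 1) (\<Sum>j\<in>{1..<2 * N + 1}. c2_gf_term (2 * N + 1) j) (\<Sum>j\<in>{1..N}. c2_gf_term (2 * N + 1) j)"
  proof (rule agree_below_sum_subset)
    fix j assume "j \<in> {1..<2 * N + 1} - {1..N}"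
    then have "N + 1 \<le> j" by auto
    moreover have "j \<le> j\<^sup>2" by (simp add: power2_eq_square le_square)
    ultimately have "2 * N + 1 \<le> 2 * j\<^sup>2" by linarith
    then show "agree_below (2 * N + 1) (c2_gf_term (2 * N + 1) j) 0"
      unfolding c2_gf_term_def mult.assoc by (rule agree_below_X_power_mult)
  qed auto
  then have "(\<Sum>j\<in>{1..N}. c2_gf_term (2 * N + 1) j) $ (2 * N) = (\<Sum>j\<in>{1..<2 * N + 1}. c2_gf_term (2 * N + 1) j) $ (2 * N)"
    by (simp add: agree_below_def)
  finally show ?thesis .
qed

section \<open>Triangular numbers modulo 5\<close>

lemma pronic_mod_5: "m * (m + 1) mod 5 \<in> {0, 1, 2 :: nat}"
proof -
  have eq: "m * (m + 1) mod 5 = (m mod 5) * (m mod 5 + 1) mod 5"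
    by (metis mod_add_left_eq mod_mult_eq mod_mult_right_eq)
  have "m mod 5 < 5" by simp
  then consider "m mod 5 = 0" | "m mod 5 = 1" | "m mod 5 = 2" | "m mod 5 = 3" | "m mod 5 = 4" by linarith
  then show ?thesis unfolding eq by cases simp_all
qed

lemma psi_series_nth: "psi_series w $ i = of_bool (\<exists>m. i = w * tri (Suc m))"
  by (simp add: psi_series_def)

lemma psi_series_1_nth_10n_4: "psi_series 1 $ (10 * n + 4) = 0"
proof -
  have "10 * n + 4 \<noteq> tri (Suc m)" for m
  proof
    assume "10 * n + 4 = tri (Suc m)"
    then have "m * (m + 1) = 20 * n + 8" using tri_Suc_double[of m] by simp
    then have "m * (m + 1) mod 5 = 3" by presburger
    then show False using pronic_mod_5[of m] by simp
  qed
  then show ?thesis by (simp add: psi_series_nth del: tri.simps)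
qed

lemma psi_series_2_nth_10n_4: "psi_series 2 $ (10 * n + 4) = 0"
proof -
  have "10 * n + 4 \<noteq> 2 * tri (Suc m)" for m
  proof
    assume "10 * n + 4 = 2 * tri (Suc m)"
    then have "m * (m + 1) = 10 * n + 4" using tri_Suc_double[of m] by simp
    then have "m * (m + 1) mod 5 = 4" by presburger
    then show False using pronic_mod_5[of m] by simp
  qed
  then show ?thesis by (simp add: psi_series_nth del: tri.simps)
qed

lemma of_nat_bit_eq_0_iff: "(of_nat k :: bit) = 0 \<longleftrightarrow> even k"
  by (induction k) auto

theorem theorem2:
  fixes n :: nat
  shows "even (c2 (5*n + 2))"
proof -
  define N where "N = 5 * n + 2"
  have double_N: "2 * N = 10 * n + 4" by (simp add: N_def)
  have "(of_nat (c2 N) :: bit) = (\<Sum>j\<in>{1..<2 * N + 1}. c2_gf_term (2 * N + 1) j) $ (2 * N)"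
    by (rule c2_eq_coeff_c2_gf)
  also have "\<dots> = psi_series 1 $ (2 * N) + psi_series 2 $ (2 * N)"
    by (rule c2_gf_even_coeff) simp
  also have "\<dots> = 0"
    unfolding double_N psi_series_1_nth_10n_4 psi_series_2_nth_10n_4 by simp
  finally show ?thesis
    by (simp add: of_nat_bit_eq_0_iff N_def)
qed

end
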